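(* Let $\Sigma\in\mathbb{R}^{N\times N}$ be symmetric positive definite, $\mu\in\mathbb{R}^N$, $\gamma\in[0,1]$, and $\mathcal T$ a balanced binary tree whose leaves are the assets $1,\dots,N$. Then the HRP-$\Sigma\mu$ algorithm runs in $O(N^2)$ time and $O(N^2)$ space, the space being dominated by storing $\Sigma$.
   Context: HRP-$\Sigma\mu$ algorithm (inputs $\Sigma,\mu,\mathcal T,\gamma$), defined recursively. At a leaf (asset $i$) return $\hat w=(1)$, $v=\Sigma_{ii}$, $s=\mu_i$. At an internal node $n$ with left and right subtrees having leaf index sets $L,R$: recursively obtain $(\hat w_L,v_L,s_L)$ and $(\hat w_R,v_R,s_R)$; compute $c=\hat w_L^\top\Sigma_{LR}\hat w_R$, $\Delta=v_Lv_R-\gamma^2c^2$, $\alpha_L^{\mathrm{raw}}=(v_Rs_L-\gamma cs_R)/\Delta$, $\alpha_R^{\mathrm{raw}}=(v_Ls_R-\gamma cs_L)/\Delta$, $Z=|\alpha_L^{\mathrm{raw}}|+|\alpha_R^{\mathrm{raw}}|$, $\alpha_k=\alpha_k^{\mathrm{raw}}/Z$; the node representative is the stacked vector $\hat w_n=(\alpha_L\hat w_L,\alpha_R\hat w_R)\in\mathbb{R}^{L\cup R}$, with $v_n=\hat w_n^\top\Sigma_{nn}\hat w_n$ and $s_n=\hat w_n^\top\mu_n$. The output is the representative at the root. Time is counted in arithmetic operations on real numbers; a balanced binary tree has depth $O(\log N)$ with the leaves split as evenly as possible at every node. *)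

theory Defs
  imports Main "HOL.Real"
begin

text \<open>Cost model: the algorithm is written out with explicit counts of the
arithmetic operations on reals it performs (time) and of the number of reals
it keeps in working memory besides the input (auxiliary space).\<close>

datatype htree = Leaf nat | Node htree htree

fun leaves :: "htree \<Rightarrow> nat list" where
  "leaves (Leaf i) = [i]"
| "leaves (Node l r) = leaves l @ leaves r"

fun balanced :: "htree \<Rightarrow> bool" where
  "balanced (Leaf i) = True"
| "balanced (Node l r) =
     (balanced l \<and> balanced r \<and>
      length (leaves l) \<le> length (leaves r) + 1 \<and>
      length (leaves r) \<le> length (leaves l) + 1)"

definition spd :: "nat \<Rightarrow> (nat \<Rightarrow> nat \<Rightarrow> real) \<Rightarrow> bool" where
  "spd N S \<longleftrightarrow> (\<forall>i<N. \<forall>j<N. S i j = S j i) \<and>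
     (\<forall>x::nat \<Rightarrow> real. (\<exists>i<N. x i \<noteq> 0) \<longrightarrow>
        (\<Sum>i<N. \<Sum>j<N. x i * S i j * x j) > 0)"

text \<open>Dot product of two vectors of length n: n multiplications, n-1 additions.\<close>
definition dotv :: "real list \<Rightarrow> real list \<Rightarrow> real" where
  "dotv x y = sum_list (map2 (*) x y)"
definition dot_ops :: "nat \<Rightarrow> nat" where
  "dot_ops n = 2 * n - 1"

text \<open>x^T S_{IJ} y computed as x^T (S_{IJ} y).\<close>
definition matvec :: "(nat \<Rightarrow> nat \<Rightarrow> real) \<Rightarrow> nat list \<Rightarrow> nat list \<Rightarrow> real list \<Rightarrow> real list" where
  "matvec S I J y = map (\<lambda>i. sum_list (map2 (\<lambda>j yj. S i j * yj) J y)) I"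
definition bilin :: "(nat \<Rightarrow> nat \<Rightarrow> real) \<Rightarrow> nat list \<Rightarrow> nat list \<Rightarrow> real list \<Rightarrow> real list \<Rightarrow> real" where
  "bilin S I J x y = dotv x (matvec S I J y)"
definition bilin_ops :: "nat \<Rightarrow> nat \<Rightarrow> nat" where
  "bilin_ops m k = m * dot_ops k + dot_ops m"

text \<open>HRP-Sigma-mu. Returns (representative w (indexed along leaves t), v, s,
  number of arithmetic operations, peak auxiliary space in reals).\<close>
fun hrp :: "(nat \<Rightarrow> nat \<Rightarrow> real) \<Rightarrow> (nat \<Rightarrow> real) \<Rightarrow> real \<Rightarrow> htree
             \<Rightarrow> real list \<times> real \<times> real \<times> nat \<times> nat" where
  "hrp S m g (Leaf i) = ([1], S i i, m i, 0, 3)"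
| "hrp S m g (Node l r) =
    (let (wL, vL, sL, oL, pL) = hrp S m g l;
         (wR, vR, sR, oR, pR) = hrp S m g r;
         L = leaves l; R = leaves r; n = length L + length R;
         c = bilin S L R wL wR;
         gc = g * c;
         D = vL * vR - gc * gc;
         aLr = (vR * sL - gc * sR) / D;
         aRr = (vL * sR - gc * sL) / D;
         Z = \<bar>aLr\<bar> + \<bar>aRr\<bar>;
         aL = aLr / Z; aR = aRr / Z;
         w = map ((*) aL) wL @ map ((*) aR) wR;
         v = bilin S (L @ R) (L @ R) w w;
         s = dotv w (map m (L @ R));
         ops = oL + oR + bilin_ops (length L) (length R)
               + 4 + 4 + 4 + 3 + 2 + n + bilin_ops n n + dot_ops n;
         sp = max pL (max (length wL + 3 + pR) (3 * n + 12))
     in (w, v, s, ops, sp))"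

definition hrp_output :: "(nat \<Rightarrow> nat \<Rightarrow> real) \<Rightarrow> (nat \<Rightarrow> real) \<Rightarrow> real \<Rightarrow> htree \<Rightarrow> real list" where
  "hrp_output S m g t = fst (hrp S m g t)"

definition hrp_time :: "(nat \<Rightarrow> nat \<Rightarrow> real) \<Rightarrow> (nat \<Rightarrow> real) \<Rightarrow> real \<Rightarrow> htree \<Rightarrow> nat" where
  "hrp_time S m g t = fst (snd (snd (snd (hrp S m g t))))"

definition hrp_aux_space :: "(nat \<Rightarrow> nat \<Rightarrow> real) \<Rightarrow> (nat \<Rightarrow> real) \<Rightarrow> real \<Rightarrow> htree \<Rightarrow> nat" where
  "hrp_aux_space S m g t = snd (snd (snd (snd (hrp S m g t))))"

text \<open>Total space: the stored input Sigma (N*N reals), mu (N reals), plus auxiliary space.\<close>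
definition hrp_space :: "nat \<Rightarrow> (nat \<Rightarrow> nat \<Rightarrow> real) \<Rightarrow> (nat \<Rightarrow> real) \<Rightarrow> real \<Rightarrow> htree \<Rightarrow> nat" where
  "hrp_space N S m g t = N * N + N + hrp_aux_space S m g t"

end

theory Submission
  imports Defs
begin

text \<open>At a node whose subtrees have a and b leaves the algorithm spends O((a+b)^2)
operations, dominated by the quadratic form of the new representative. Since
(a+b)^2 = a^2 + b^2 + 2ab, a bound C k^2 for trees with k leaves propagates to the node
as soon as the node's own cost is at most 2Cab; a balanced split gives
ab \<ge> (a+b)^2/5, which is what makes this work. The auxiliary memory is linear:
while the right subtree is processed only the left representative is kept.\<close>

lemma length_leaves_pos: "0 < length (leaves t)"
  by (induction t) auto

lemma length_hrp_output: "length (hrp_output S m g t) = length (leaves t)"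
  unfolding hrp_output_def by (induction t) (auto simp: Let_def split: prod.splits)

lemma hrp_time_Leaf: "hrp_time S m g (Leaf i) = 0"
  by (simp add: hrp_time_def)

lemma hrp_time_Node:
  "hrp_time S m g (Node l r) =
     hrp_time S m g l + hrp_time S m g r
     + bilin_ops (length (leaves l)) (length (leaves r)) + 17
     + length (leaves (Node l r))
     + bilin_ops (length (leaves (Node l r))) (length (leaves (Node l r)))
     + dot_ops (length (leaves (Node l r)))"
  by (simp add: hrp_time_def Let_def split_def)

lemma hrp_aux_space_Leaf: "hrp_aux_space S m g (Leaf i) = 3"
  by (simp add: hrp_aux_space_def)

lemma hrp_aux_space_Node:
  "hrp_aux_space S m g (Node l r) =
     max (hrp_aux_space S m g l)
       (max (length (leaves l) + 3 + hrp_aux_space S m g r)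
            (3 * length (leaves (Node l r)) + 12))"
  using length_hrp_output[of S m g l]
  by (simp add: hrp_aux_space_def hrp_output_def Let_def split_def)

lemma dot_ops_le: "dot_ops n \<le> 2 * n"
  by (simp add: dot_ops_def)

lemma bilin_ops_le: "bilin_ops m k \<le> 2 * (m * k) + 2 * m"
proof -
  have "m * dot_ops k \<le> 2 * (m * k)" using mult_le_mono2[OF dot_ops_le[of k]] by simp
  then show ?thesis using dot_ops_le[of m] unfolding bilin_ops_def by linarith
qed

lemma square_add_le_5_mult:
  fixes a b :: nat
  assumes "1 \<le> a" "1 \<le> b" "a \<le> b + 1" "b \<le> a + 1"
  shows "(a + b)\<^sup>2 \<le> 5 * (a * b)"
proof -
  have "b = a \<or> b = a + 1 \<or> a = b + 1" using assms(3,4) by linarith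
  moreover have "1 \<le> a * a" "1 \<le> b * b" using assms(1,2) by simp_all
  ultimately show ?thesis by (auto simp: power2_eq_square algebra_simps)
qed

lemma hrp_node_ops_le:
  fixes a b :: nat
  assumes "1 \<le> a" "1 \<le> b"
  shows "bilin_ops a b + 17 + (a + b) + bilin_ops (a + b) (a + b) + dot_ops (a + b)
           \<le> 2 * (a * b) + 10 * (a + b)\<^sup>2"
proof -
  define n where "n = a + b"
  have "a \<le> n" "2 \<le> n" using assms unfolding n_def by simp_all
  moreover from \<open>2 \<le> n\<close> have "2 * n \<le> n * n" "4 \<le> n * n"
    using mult_le_mono1[of 2 n n] mult_le_mono[of 2 n 2 n] by simp_all
  ultimately show ?thesis
    using bilin_ops_le[of a b] bilin_ops_le[of n n] dot_ops_le[of n]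
    unfolding n_def[symmetric] power2_eq_square by linarith
qed

lemma hrp_time_le:
  "balanced t \<Longrightarrow> hrp_time S m g t \<le> 30 * (length (leaves t))\<^sup>2"
proof (induction t)
  case (Leaf i)
  show ?case by (simp add: hrp_time_Leaf)
next
  case (Node l r)
  define a where "a = length (leaves l)"
  define b where "b = length (leaves r)"
  have ab: "1 \<le> a" "1 \<le> b" "a \<le> b + 1" "b \<le> a + 1"
    using length_leaves_pos[of l] length_leaves_pos[of r] Node.prems
    unfolding a_def b_def by (simp_all add: Suc_le_eq)
  have "hrp_time S m g (Node l r) \<le> 30 * a\<^sup>2 + 30 * b\<^sup>2 + 2 * (a * b) + 10 * (a + b)\<^sup>2"
    using Node hrp_node_ops_le[OF ab(1,2)] by (simp add: hrp_time_Node a_def b_def)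
  also have "\<dots> \<le> 30 * (a + b)\<^sup>2"
    using square_add_le_5_mult[OF ab] by (simp add: power2_sum)
  finally show ?case by (simp add: a_def b_def)
qed

lemma hrp_aux_space_le: "hrp_aux_space S m g t \<le> 15 * length (leaves t)"
proof (induction t)
  case (Leaf i)
  show ?case by (simp add: hrp_aux_space_Leaf)
next
  case (Node l r)
  have "1 \<le> length (leaves l)" "1 \<le> length (leaves r)"
    using length_leaves_pos[of l] length_leaves_pos[of r] by (simp_all add: Suc_le_eq)
  with Node.IH show ?case by (simp add: hrp_aux_space_Node)
qed

theorem mainTheorem16:
  "\<exists>C::real. \<forall>(N::nat) (S::nat \<Rightarrow> nat \<Rightarrow> real) (m::nat \<Rightarrow> real) (g::real) (T::htree).
     spd N S \<and> 0 \<le> g \<and> g \<le> 1 \<and> balanced T \<and>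
     distinct (leaves T) \<and> set (leaves T) = {..<N} \<longrightarrow>
       real (hrp_time S m g T) \<le> C * real N ^ 2 \<and>
       real (hrp_space N S m g T) \<le> C * real N ^ 2 \<and>
       real (hrp_aux_space S m g T) \<le> C * real N"
proof (intro exI[of _ 30] allI impI)
  fix N S m g T
  assume "spd N S \<and> 0 \<le> g \<and> g \<le> (1::real) \<and> balanced T \<and>
     distinct (leaves T) \<and> set (leaves T) = {..<N}"
  \<comment> \<open>The operation counts do not depend on the data.\<close>
  then have bal: "balanced T" and N: "length (leaves T) = N"
    using distinct_card[of "leaves T"] by auto
  have "1 \<le> N" using length_leaves_pos[of T] N by simp
  then have "N \<le> N\<^sup>2" by (simp add: power2_eq_square)
  moreover have time: "hrp_time S m g T \<le> 30 * N\<^sup>2"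
    using hrp_time_le[OF bal] N by simp
  moreover have aux: "hrp_aux_space S m g T \<le> 15 * N"
    using hrp_aux_space_le[of S m g T] N by simp
  ultimately have space: "hrp_space N S m g T \<le> 30 * N\<^sup>2"
    unfolding hrp_space_def power2_eq_square by linarith
  then have "real (hrp_time S m g T) \<le> real (30 * N\<^sup>2)"
    and "real (hrp_space N S m g T) \<le> real (30 * N\<^sup>2)"
    and "real (hrp_aux_space S m g T) \<le> real (30 * N)"
    using time aux by (simp_all only: of_nat_le_iff)
  then show "real (hrp_time S m g T) \<le> 30 * real N ^ 2 \<and>
       real (hrp_space N S m g T) \<le> 30 * real N ^ 2 \<and>
       real (hrp_aux_space S m g T) \<le> 30 * real N"
    by simp
qed

end
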